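(* Let $1<p<N$, $q>0$, $\mu>0$, $g(s)=\frac{(p-1)^{q-p+1}}{\mu^q}(1+\mu s)^{p-1}|\ln(1+\mu s)|^{q-1}\ln(1+\mu s)$ for $s>-1/\mu$, and $G(s)=\int_0^sg(t)\,dt$. Then $H(s):=g(s)s-pG(s)\to+\infty$ as $s\to+\infty$. *)

theory Defs
  imports "HOL-Analysis.Analysis"
begin

definition gfun :: "real \<Rightarrow> real \<Rightarrow> real \<Rightarrow> real \<Rightarrow> real" where
  "gfun p q \<mu> s = ((p - 1) powr (q - p + 1) / \<mu> powr q) * (1 + \<mu> * s) powr (p - 1)
     * \<bar>ln (1 + \<mu> * s)\<bar> powr (q - 1) * ln (1 + \<mu> * s)"

definition Gfun :: "real \<Rightarrow> real \<Rightarrow> real \<Rightarrow> real \<Rightarrow> real" where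
  "Gfun p q \<mu> s = (if 0 \<le> s then integral {0..s} (gfun p q \<mu>)
                    else - integral {s..0} (gfun p q \<mu>))"

definition Hfun :: "real \<Rightarrow> real \<Rightarrow> real \<Rightarrow> real \<Rightarrow> real" where
  "Hfun p q \<mu> s = gfun p q \<mu> s * s - p * Gfun p q \<mu> s"

end

theory Submission
  imports Defs "HOL-Real_Asymp.Real_Asymp"
begin

text \<open>For \<open>s \<ge> 0\<close> the absolute value in \<open>g\<close> is harmless and
  \<open>g(s) = C (1 + \<mu>s)^(p-1) ln(1 + \<mu>s)^q\<close>. Differentiating, \<open>H' = g' s - (p - 1) g\<close>
  simplifies to \<open>C (1 + \<mu>s)^(p-2) ln(1 + \<mu>s)^(q-1) (q\<mu>s - (p - 1) ln(1 + \<mu>s))\<close>,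
  which grows like \<open>s^(p-1) ln(s)^(q-1)\<close> and so tends to infinity; a function whose
  derivative tends to infinity tends to infinity itself.\<close>

lemma filterlim_at_top_if_derivative_at_top:
  fixes f f' :: "real \<Rightarrow> real"
  assumes "\<forall>\<^sub>F x in at_top. (f has_real_derivative f' x) (at x)"
    and "filterlim f' at_top at_top"
  shows "filterlim f at_top at_top"
proof -
  have "\<forall>\<^sub>F x in at_top. (f has_real_derivative f' x) (at x) \<and> 1 \<le> f' x"
    using assms by (simp add: eventually_conj filterlim_at_top)
  then obtain a where a: "\<And>x. x \<ge> a \<Longrightarrow> (f has_real_derivative f' x) (at x) \<and> 1 \<le> f' x"
    by (auto simp: eventually_at_top_linorder)
  have linear_bound: "f a + (x - a) \<le> f x" if "a \<le> x" for x
  proof -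
    have "f a - a \<le> f x - x"
    proof (rule DERIV_nonneg_imp_nondecreasing[OF that])
      fix y assume "a \<le> y"
      then have "(f has_real_derivative f' y) (at y)" "1 \<le> f' y"
        using a by auto
      then show "\<exists>d. ((\<lambda>x. f x - x) has_real_derivative d) (at y) \<and> 0 \<le> d"
        by (auto intro!: exI[of _ "f' y - 1"] derivative_eq_intros)
    qed
    then show ?thesis by simp
  qed
  have "filterlim (\<lambda>x. f a + (x - a)) at_top at_top"
    by real_asymp
  then show ?thesis
    by (rule filterlim_at_top_mono)
      (auto simp: eventually_at_top_linorder intro!: exI[of _ a] linear_bound)
qed

lemma integral_atLeastAtMost_has_real_derivative:
  fixes f :: "real \<Rightarrow> real"
  assumes "continuous_on {a..} f" "a < s"
  shows "((\<lambda>x. integral {a..x} f) has_real_derivative f s) (at s)"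
proof -
  have "continuous_on {a..s + 1} f"
    using assms(1) by (rule continuous_on_subset) auto
  from integral_has_real_derivative[OF this, of s]
  have "((\<lambda>x. integral {a..x} f) has_real_derivative f s) (at s within {a..s + 1})"
    using assms(2) by simp
  moreover have "s \<in> interior {a..s + 1}"
    using assms(2) by simp
  ultimately show ?thesis
    by (metis at_within_interior)
qed

lemma gfun_eq_nonneg:
  assumes "\<mu> > 0" "s \<ge> 0"
  shows "gfun p q \<mu> s = (p - 1) powr (q - p + 1) / \<mu> powr q
    * (1 + \<mu> * s) powr (p - 1) * ln (1 + \<mu> * s) powr q"
proof -
  have "ln (1 + \<mu> * s) \<ge> 0"
    using assms by simp
  then have "\<bar>ln (1 + \<mu> * s)\<bar> powr (q - 1) * ln (1 + \<mu> * s) = ln (1 + \<mu> * s) powr q"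
    by (cases "ln (1 + \<mu> * s) = 0") (simp_all add: powr_mult_base mult.commute)
  then show ?thesis
    unfolding gfun_def by (simp add: mult.assoc)
qed

lemma continuous_on_gfun:
  assumes "q > 0" "\<mu> > 0"
  shows "continuous_on {0..} (gfun p q \<mu>)"
proof -
  have pos: "1 + \<mu> * s > 0" if "s \<ge> 0" for s
    using assms that by (simp add: add_pos_nonneg)
  have "continuous_on {0..} (\<lambda>s. (p - 1) powr (q - p + 1) / \<mu> powr q
      * (1 + \<mu> * s) powr (p - 1) * ln (1 + \<mu> * s) powr q)"
    using assms pos by (auto intro!: continuous_intros continuous_on_powr' simp: less_le)
  then show ?thesis
    by (rule continuous_on_cong[THEN iffD1, rotated 2]) (auto simp: gfun_eq_nonneg assms)
qed

lemma gfun_has_real_derivative: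
  assumes "\<mu> > 0" "s > 0"
  shows "(gfun p q \<mu> has_real_derivative (p - 1) powr (q - p + 1) / \<mu> powr q * \<mu>
    * (1 + \<mu> * s) powr (p - 2) * ln (1 + \<mu> * s) powr (q - 1)
    * ((p - 1) * ln (1 + \<mu> * s) + q)) (at s)"
proof -
  define C x L where "C = (p - 1) powr (q - p + 1) / \<mu> powr q"
    and "x = 1 + \<mu> * s" and "L = ln x"
  have "x > 1"
    using assms by (simp add: x_def)
  then have "L > 0"
    by (simp add: L_def)
  have x_powr: "x powr (p - 1) = x powr (p - 2) * x" and L_powr: "L powr q = L powr (q - 1) * L"
    using powr_mult_base[of x "p - 2"] powr_mult_base[of L "q - 1"] \<open>x > 1\<close> \<open>L > 0\<close>
    by (simp_all add: mult.commute)
  have "((\<lambda>t. C * (1 + \<mu> * t) powr (p - 1) * ln (1 + \<mu> * t) powr q) has_real_derivative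
      C * ((p - 1) * \<mu> * x powr (p - 2) * L powr q + x powr (p - 1) * q * L powr (q - 1) * \<mu> / x))
      (at s)"
    using \<open>x > 1\<close> \<open>L > 0\<close> unfolding x_def L_def
    by (auto intro!: derivative_eq_intros simp: field_simps)
  also have "C * ((p - 1) * \<mu> * x powr (p - 2) * L powr q + x powr (p - 1) * q * L powr (q - 1) * \<mu> / x)
      = C * \<mu> * x powr (p - 2) * L powr (q - 1) * ((p - 1) * L + q)"
    using \<open>x > 1\<close> unfolding x_powr L_powr by (simp add: field_simps)
  finally show ?thesis
    unfolding C_def x_def L_def
    by (rule has_field_derivative_transform_within_open[where S = "{0<..}"])
      (use assms in \<open>auto simp: gfun_eq_nonneg\<close>)
qed

lemma Gfun_has_real_derivative:
  assumes "q > 0" "\<mu> > 0" "s > 0"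
  shows "(Gfun p q \<mu> has_real_derivative gfun p q \<mu> s) (at s)"
  using integral_atLeastAtMost_has_real_derivative[OF continuous_on_gfun[OF assms(1,2)] assms(3)]
  by (rule has_field_derivative_transform_within_open[where S = "{0<..}"])
    (use assms(3) in \<open>auto simp: Gfun_def\<close>)

lemma Hfun_has_real_derivative:
  assumes "q > 0" "\<mu> > 0" "s > 0"
  shows "(Hfun p q \<mu> has_real_derivative (p - 1) powr (q - p + 1) / \<mu> powr q
    * (1 + \<mu> * s) powr (p - 2) * ln (1 + \<mu> * s) powr (q - 1)
    * (q * \<mu> * s - (p - 1) * ln (1 + \<mu> * s))) (at s)"
proof -
  define C x L where "C = (p - 1) powr (q - p + 1) / \<mu> powr q"
    and "x = 1 + \<mu> * s" and "L = ln x"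
  have "x > 1"
    using assms by (simp add: x_def)
  then have "x powr (p - 1) = x powr (p - 2) * x" and "L powr q = L powr (q - 1) * L"
    using powr_mult_base[of x "p - 2"] powr_mult_base[of L "q - 1"] by (simp_all add: L_def mult.commute)
  then have gfun_s: "gfun p q \<mu> s = C * x powr (p - 2) * L powr (q - 1) * (x * L)"
    using assms by (simp add: gfun_eq_nonneg C_def flip: x_def L_def)
  have "Hfun p q \<mu> = (\<lambda>s. gfun p q \<mu> s * s - p * Gfun p q \<mu> s)"
    by (simp add: Hfun_def fun_eq_iff)
  moreover have "((\<lambda>s. gfun p q \<mu> s * s - p * Gfun p q \<mu> s) has_real_derivative
      C * \<mu> * x powr (p - 2) * L powr (q - 1) * ((p - 1) * L + q) * s
      + gfun p q \<mu> s - p * gfun p q \<mu> s) (at s)"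
    using assms unfolding C_def x_def L_def
    by (auto intro!: derivative_eq_intros gfun_has_real_derivative Gfun_has_real_derivative)
  moreover have "C * \<mu> * x powr (p - 2) * L powr (q - 1) * ((p - 1) * L + q) * s
      + gfun p q \<mu> s - p * gfun p q \<mu> s
      = C * x powr (p - 2) * L powr (q - 1) * (q * \<mu> * s - (p - 1) * L)"
    unfolding gfun_s x_def by (simp add: algebra_simps)
  ultimately show ?thesis
    by (simp add: C_def x_def L_def)
qed

theorem lemma3p1:
  fixes p q \<mu> :: real and N :: nat
  assumes "1 < p" "p < real N" "q > 0" "\<mu> > 0"
  shows "filterlim (Hfun p q \<mu>) at_top at_top"
proof -
  define C where "C = (p - 1) powr (q - p + 1) / \<mu> powr q"
  have "C > 0"
    using assms by (simp add: C_def)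
  have "\<forall>\<^sub>F s in at_top. (Hfun p q \<mu> has_real_derivative C
      * (1 + \<mu> * s) powr (p - 2) * ln (1 + \<mu> * s) powr (q - 1)
      * (q * \<mu> * s - (p - 1) * ln (1 + \<mu> * s))) (at s)"
    using eventually_gt_at_top[of 0] unfolding C_def
    by eventually_elim (rule Hfun_has_real_derivative[OF assms(3,4)])
  moreover have "filterlim (\<lambda>s. C * (1 + \<mu> * s) powr (p - 2) * ln (1 + \<mu> * s) powr (q - 1)
      * (q * \<mu> * s - (p - 1) * ln (1 + \<mu> * s))) at_top at_top"
    using assms \<open>C > 0\<close> by real_asymp
  ultimately show ?thesis
    by (rule filterlim_at_top_if_derivative_at_top)
qed

end
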